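(* Let $(A,\gamma)$ be a quasiordered set. If $\mathrm{hsdim}(A,\gamma)=1$, then $\gamma$ is a half-space, and $\dim\bigl(A/(\gamma\cap\gamma^{-1}),r_\gamma\bigr)=1$ if $\gamma$ has no empty box with more than one element, while $\dim\bigl(A/(\gamma\cap\gamma^{-1}),r_\gamma\bigr)=2$ if $\gamma$ has an empty box with more than one element. If $\mathrm{hsdim}(A,\gamma)\ge2$, then $\dim\bigl(A/(\gamma\cap\gamma^{-1}),r_\gamma\bigr)=\mathrm{hsdim}(A,\gamma)$.
   Context: A quasiorder on $A$ is a reflexive and transitive relation; $\Delta_A=\{(a,a)\mid a\in A\}$. A quasiorder $\alpha$ on $A$ is a half-space if there is a quasiorder $\beta$ on $A$ with $\alpha\cup\beta=A\times A$ and $\alpha\cap\beta=\Delta_A$; then $\beta=\Delta_A\cup((A\times A)\setminus\alpha)$. The boxes of a half-space $\alpha$ are the classes of the equivalence relation $\varepsilon=(\alpha\cap\alpha^{-1})\cup(\beta\cap\beta^{-1})$; a box $B$ is empty if $\alpha\cap(B\times B)=\Delta_B$ and full if $|B|>1$ and $B\times B\subseteq\alpha$ (every box is either full or empty). A half-space realizer of a quasiorder $\gamma$ on $A$ is a set $\{\alpha_i\mid i\in I\}$ of half-spaces on $A$ with $\bigcap_{i\in I}\alpha_i=\gamma$; $\mathrm{hsdim}(A,\gamma)$ is the minimum cardinality of a half-space realizer. $r_\gamma$ is the induced partial order on $A/(\gamma\cap\gamma^{-1})$: $([a],[b])\in r_\gamma$ iff $(a,b)\in\gamma$. $\dim$ denotes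 order dimension: the least cardinality of a set of linear extensions whose intersection is the given partial order. *)

theory Defs
  imports Main
begin

text \<open>Quasiorders on A are the library's preorder_on A (reflexive on A, transitive, contained in A x A).\<close>

definition half_space :: "'a set \<Rightarrow> 'a rel \<Rightarrow> bool" where
  "half_space A \<alpha> \<longleftrightarrow> preorder_on A \<alpha> \<and>
     (\<exists>\<beta>. preorder_on A \<beta> \<and> \<alpha> \<union> \<beta> = A \<times> A \<and> \<alpha> \<inter> \<beta> = Id_on A)"

definition hs_compl :: "'a set \<Rightarrow> 'a rel \<Rightarrow> 'a rel" where
  "hs_compl A \<alpha> = Id_on A \<union> ((A \<times> A) - \<alpha>)"

definition box_equiv :: "'a set \<Rightarrow> 'a rel \<Rightarrow> 'a rel" where
  "box_equiv A \<alpha> = (\<alpha> \<inter> \<alpha>\<inverse>) \<union> (hs_compl A \<alpha> \<inter> (hs_compl A \<alpha>)\<inverse>)"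

definition boxes :: "'a set \<Rightarrow> 'a rel \<Rightarrow> 'a set set" where
  "boxes A \<alpha> = A // box_equiv A \<alpha>"

definition empty_box :: "'a rel \<Rightarrow> 'a set \<Rightarrow> bool" where
  "empty_box \<alpha> B \<longleftrightarrow> \<alpha> \<inter> (B \<times> B) = Id_on B"

text \<open>Half-space realizers. The intersection of a family of relations on A is taken
  inside A x A (so the empty family has intersection A x A).\<close>
definition hs_realizer :: "'a set \<Rightarrow> 'a rel \<Rightarrow> 'a rel set \<Rightarrow> bool" where
  "hs_realizer A \<gamma> R \<longleftrightarrow> (\<forall>\<alpha>\<in>R. half_space A \<alpha>) \<and> (A \<times> A) \<inter> \<Inter>R = \<gamma>"

definition hsdim :: "'a set \<Rightarrow> 'a rel \<Rightarrow> 'a rel rel" where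
  "hsdim A \<gamma> = card_of (SOME R. hs_realizer A \<gamma> R \<and>
      (\<forall>R'. hs_realizer A \<gamma> R' \<longrightarrow> (card_of R, card_of R') \<in> ordLeq))"

definition lin_realizer :: "'b set \<Rightarrow> 'b rel \<Rightarrow> 'b rel set \<Rightarrow> bool" where
  "lin_realizer X r L \<longleftrightarrow> (\<forall>l\<in>L. linear_order_on X l \<and> r \<subseteq> l) \<and> (X \<times> X) \<inter> \<Inter>L = r"

definition odim :: "'b set \<Rightarrow> 'b rel \<Rightarrow> 'b rel rel" where
  "odim X r = card_of (SOME L. lin_realizer X r L \<and>
      (\<forall>L'. lin_realizer X r L' \<longrightarrow> (card_of L, card_of L') \<in> ordLeq))"

definition qclasses :: "'a set \<Rightarrow> 'a rel \<Rightarrow> 'a set set" where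
  "qclasses A \<gamma> = A // (\<gamma> \<inter> \<gamma>\<inverse>)"

definition r_of :: "'a rel \<Rightarrow> 'a set rel" where
  "r_of \<gamma> = {((\<gamma> \<inter> \<gamma>\<inverse>) `` {a}, (\<gamma> \<inter> \<gamma>\<inverse>) `` {b}) | a b. (a, b) \<in> \<gamma>}"

end

theory Submission
  imports Defs
begin

text \<open>
  A linear extension of \<open>r\<^sub>\<gamma>\<close> is the same thing as a total preorder on \<open>A\<close> that contains
  \<open>\<gamma>\<close> and has the same equivalence classes. Total preorders are half-spaces, so every linear
  realizer gives a half-space realizer of at most the same size: \<open>hsdim \<le> dim\<close>.

  Conversely, let \<open>(\<alpha>\<^sub>i)\<^sub>i\<^sub>\<in>\<^sub>I\<close> be a half-space realizer with two distinct indices \<open>p, q\<close>,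
  and fix one total preorder \<open>M\<close> of the above kind. The total preorder \<open>L\<^sub>i\<close> arranges the
  boxes of \<open>\<alpha>\<^sub>i\<close> as \<open>\<alpha>\<^sub>i\<close> does, orders each full box by \<open>M\<close>, and orders each empty box
  first by the reversed box order of the pivot \<open>\<alpha>\<^sub>j\<close> (\<open>j = q\<close> if \<open>i = p\<close>, else \<open>j = p\<close>), then
  by \<open>M\<inverse>\<close> within full boxes of \<open>\<alpha>\<^sub>j\<close> and, within empty boxes of \<open>\<alpha>\<^sub>j\<close>, by \<open>M\<inverse>\<close> for
  \<open>i = p\<close> and by \<open>M\<close> otherwise. If \<open>(x, y) \<notin> \<gamma>\<close>, some \<open>\<alpha>\<^sub>k\<close> misses \<open>(x, y)\<close>; when \<open>x, y\<close>
  lie in an empty box of \<open>\<alpha>\<^sub>k\<close> the pivot supplies an \<open>L\<^sub>i\<close> that reverses them. Hence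
  \<open>dim \<le> hsdim\<close> as soon as \<open>hsdim \<ge> 2\<close>.

  If \<open>hsdim = 1\<close>, the single half-space is \<open>\<gamma>\<close> itself. It is total, so that \<open>r\<^sub>\<gamma>\<close> is
  linear, unless some empty box has two elements; these are incomparable, which forces
  \<open>dim \<ge> 2\<close>, and the construction for the family \<open>(\<gamma>, \<gamma>)\<close> gives \<open>dim \<le> 2\<close>.
\<close>

unbundle cardinal_syntax

section \<open>Szpilrajn extension\<close>

text \<open>The added pairs are those forced by \<open>v \<le> u\<close> and transitivity.\<close>

lemma partial_order_on_add_pair:
  assumes r: "partial_order_on X r" and "(u, v) \<notin> r"
  shows "partial_order_on X (r \<union> {(a, b). (a, v) \<in> r \<and> (u, b) \<in> r})"
proof -
  have "r \<subseteq> X \<times> X" "refl_on X r" and tr: "trans r" and "antisym r"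
    using r by (auto simp: partial_order_on_def preorder_on_def)
  moreover have "trans (r \<union> {(a, b). (a, v) \<in> r \<and> (u, b) \<in> r})"
    using tr \<open>(u, v) \<notin> r\<close> unfolding trans_def by blast
  moreover have "antisym (r \<union> {(a, b). (a, v) \<in> r \<and> (u, b) \<in> r})"
    using tr \<open>antisym r\<close> \<open>(u, v) \<notin> r\<close> unfolding trans_def antisym_def by blast
  ultimately show ?thesis
    unfolding partial_order_on_def preorder_on_def refl_on_def by blast
qed

theorem szpilrajn:
  assumes "partial_order_on X r"
  shows "\<exists>l. linear_order_on X l \<and> r \<subseteq> l"
proof -
  let ?P = "{l. partial_order_on X l \<and> r \<subseteq> l}"
  have "\<exists>m\<in>?P. \<forall>l\<in>?P. m \<subseteq> l \<longrightarrow> l = m"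
  proof (rule subset_Zorn_nonempty)
    show "?P \<noteq> {}" using assms by auto
    fix C assume "C \<noteq> {}" and "subset.chain ?P C"
    then have chain: "chain\<^sub>\<subseteq> C" and C: "C \<subseteq> ?P"
      by (simp_all add: subset_chain_def chain_subset_def)
    obtain l where "l \<in> C" using \<open>C \<noteq> {}\<close> by blast
    have "refl_on X (\<Union>C)" "r \<subseteq> \<Union>C"
      using C \<open>l \<in> C\<close> by (auto simp: partial_order_on_def preorder_on_def refl_on_def)
    moreover have "trans (\<Union>C)" "antisym (\<Union>C)" "\<Union>C \<subseteq> X \<times> X"
      using chain_subset_trans_Union[OF chain] chain_subset_antisym_Union[OF chain] C
      by (auto simp: partial_order_on_def preorder_on_def)
    ultimately show "\<Union>C \<in> ?P"
      by (simp add: partial_order_on_def preorder_on_def)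
  qed
  then obtain m where "m \<in> ?P" and maximal: "\<forall>l\<in>?P. m \<subseteq> l \<longrightarrow> l = m" ..
  then have m: "partial_order_on X m" "r \<subseteq> m" by auto
  have "total_on X m"
  proof (rule total_onI, rule ccontr)
    fix u v assume "u \<in> X" "v \<in> X" and uv: "\<not> ((u, v) \<in> m \<or> (v, u) \<in> m)"
    let ?m' = "m \<union> {(a, b). (a, v) \<in> m \<and> (u, b) \<in> m}"
    have "(v, u) \<in> ?m'"
      using m(1) \<open>u \<in> X\<close> \<open>v \<in> X\<close> by (auto simp: partial_order_on_def preorder_on_def refl_on_def)
    moreover have "?m' = m"
      using maximal partial_order_on_add_pair[OF m(1)] uv m(2) by auto
    ultimately have "(v, u) \<in> m"
      by (simp only:)
    with uv show False
      by simp
  qed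
  with m show ?thesis by (auto simp: linear_order_on_def)
qed

lemma szpilrajn_avoiding:
  assumes r: "partial_order_on X r" and "u \<in> X" "v \<in> X" "(u, v) \<notin> r"
  shows "\<exists>l. linear_order_on X l \<and> r \<subseteq> l \<and> (u, v) \<notin> l"
proof -
  obtain l where l: "linear_order_on X l" and
    sub: "r \<union> {(a, b). (a, v) \<in> r \<and> (u, b) \<in> r} \<subseteq> l"
    using szpilrajn[OF partial_order_on_add_pair[OF assms(1,4)]] by blast
  have "(v, u) \<in> l" "u \<noteq> v"
    using sub r assms(2-4) by (auto simp: partial_order_on_def preorder_on_def refl_on_def)
  with l sub show ?thesis
    by (auto simp: linear_order_on_def partial_order_on_def antisym_def)
qed

lemma lin_realizer_all_extensions:
  assumes "partial_order_on X r"
  shows "lin_realizer X r {l. linear_order_on X l \<and> r \<subseteq> l}"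
proof -
  have "(X \<times> X) \<inter> \<Inter>{l. linear_order_on X l \<and> r \<subseteq> l} \<subseteq> r"
    using szpilrajn_avoiding[OF assms] by blast
  moreover have "r \<subseteq> X \<times> X"
    using assms by (simp add: partial_order_on_def preorder_on_def)
  ultimately show ?thesis
    unfolding lin_realizer_def by blast
qed

lemma lin_realizer_two_elements:
  assumes "lin_realizer X r L" "u \<in> X" "v \<in> X" "(u, v) \<notin> r" "(v, u) \<notin> r"
  shows "\<exists>l\<in>L. \<exists>l'\<in>L. l \<noteq> l'"
proof -
  have lin: "\<And>l. l \<in> L \<Longrightarrow> linear_order_on X l" and inter: "(X \<times> X) \<inter> \<Inter>L = r"
    using assms(1) by (auto simp: lin_realizer_def)
  obtain l l' where "l \<in> L" "(u, v) \<notin> l" "l' \<in> L" "(v, u) \<notin> l'"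
    using inter assms(2-5) by blast
  moreover have "u \<noteq> v"
  proof
    assume "u = v"
    with lin have "(u, v) \<in> (X \<times> X) \<inter> \<Inter>L"
      using \<open>u \<in> X\<close> by (auto simp: linear_order_on_def partial_order_on_def preorder_on_def refl_on_def)
    with inter assms(4) show False by blast
  qed
  ultimately have "(v, u) \<in> l"
    using lin[OF \<open>l \<in> L\<close>] assms(2,3) by (auto simp: linear_order_on_def total_on_def)
  with \<open>l \<in> L\<close> \<open>l' \<in> L\<close> \<open>(v, u) \<notin> l'\<close> show ?thesis
    by blast
qed

section \<open>Total preorders and half-spaces\<close>

definition total_preorder_on :: "'a set \<Rightarrow> 'a rel \<Rightarrow> bool" where
  "total_preorder_on A T \<longleftrightarrow> preorder_on A T \<and> total_on A T"

definition lex_refine :: "'a rel \<Rightarrow> 'a rel \<Rightarrow> 'a rel" where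
  "lex_refine P Q = {(x, y). (x, y) \<in> P \<and> ((y, x) \<notin> P \<or> (x, y) \<in> Q)}"

lemma total_preorder_on_converse:
  "total_preorder_on A T \<Longrightarrow> total_preorder_on A (T\<inverse>)"
  by (auto simp: total_preorder_on_def preorder_on_def refl_on_def total_on_def)

lemma lex_refine_sym_part:
  "lex_refine P Q \<inter> (lex_refine P Q)\<inverse> \<subseteq> (P \<inter> P\<inverse>) \<inter> (Q \<inter> Q\<inverse>)"
  by (auto simp: lex_refine_def)

lemma total_preorder_on_lex_refine:
  assumes P: "total_preorder_on A P"
    and refl: "\<And>x. x \<in> A \<Longrightarrow> (x, x) \<in> Q"
    and total: "\<And>x y. x \<in> A \<Longrightarrow> y \<in> A \<Longrightarrow> x \<noteq> y \<Longrightarrow> (x, y) \<in> P \<inter> P\<inverse> \<Longrightarrow>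
      (x, y) \<in> Q \<or> (y, x) \<in> Q"
    and trans: "\<And>x y z. x \<in> A \<Longrightarrow> y \<in> A \<Longrightarrow> z \<in> A \<Longrightarrow> x \<noteq> y \<Longrightarrow> y \<noteq> z \<Longrightarrow>
      (x, y) \<in> P \<inter> P\<inverse> \<Longrightarrow> (y, z) \<in> P \<inter> P\<inverse> \<Longrightarrow> (x, y) \<in> Q \<Longrightarrow> (y, z) \<in> Q \<Longrightarrow> (x, z) \<in> Q"
  shows "total_preorder_on A (lex_refine P Q)"
proof -
  have sub: "P \<subseteq> A \<times> A" and "refl_on A P" and transP: "trans P" and "total_on A P"
    using P by (auto simp: total_preorder_on_def preorder_on_def)
  have "trans (lex_refine P Q)"
  proof (rule transI)
    fix x y z assume xy: "(x, y) \<in> lex_refine P Q" and yz: "(y, z) \<in> lex_refine P Q"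
    then have "(x, y) \<in> P" "(y, z) \<in> P" by (auto simp: lex_refine_def)
    then have xz: "(x, z) \<in> P" and "x \<in> A" "y \<in> A" "z \<in> A"
      using transP sub by (auto dest: transD)
    show "(x, z) \<in> lex_refine P Q"
    proof (cases "(z, x) \<in> P")
      case True
      with \<open>(x, y) \<in> P\<close> \<open>(y, z) \<in> P\<close> transP have "(x, y) \<in> P \<inter> P\<inverse>" "(y, z) \<in> P \<inter> P\<inverse>"
        by (auto dest: transD)
      moreover from this xy yz have "(x, y) \<in> Q" "(y, z) \<in> Q"
        by (auto simp: lex_refine_def)
      ultimately have "(x, z) \<in> Q"
        using trans[OF \<open>x \<in> A\<close> \<open>y \<in> A\<close> \<open>z \<in> A\<close>] by (cases "x = y"; cases "y = z") auto
      with xz show ?thesis by (simp add: lex_refine_def)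
    qed (use xz in \<open>simp add: lex_refine_def\<close>)
  qed
  moreover have "total_on A (lex_refine P Q)"
    using \<open>total_on A P\<close> total unfolding total_on_def lex_refine_def by blast
  ultimately show ?thesis
    using sub \<open>refl_on A P\<close> refl
    by (auto simp: total_preorder_on_def preorder_on_def refl_on_def lex_refine_def)
qed

lemma half_space_if_total_preorder_on:
  assumes "total_preorder_on A T"
  shows "half_space A T"
  unfolding half_space_def
proof (intro conjI exI)
  have T: "T \<subseteq> A \<times> A" "trans T" "total_on A T" "preorder_on A T"
    using assms by (auto simp: total_preorder_on_def preorder_on_def)
  show "preorder_on A T" by (fact T(4))
  show "T \<union> hs_compl A T = A \<times> A" "T \<inter> hs_compl A T = Id_on A"
    using T(1,4) by (auto simp: hs_compl_def preorder_on_def refl_on_def)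
  have "trans (hs_compl A T)"
  proof (rule transI)
    fix x y z assume "(x, y) \<in> hs_compl A T" "(y, z) \<in> hs_compl A T"
    with T(2,3) show "(x, z) \<in> hs_compl A T"
      unfolding hs_compl_def total_on_def trans_def by (cases "x = y \<or> y = z") blast+
  qed
  then show "preorder_on A (hs_compl A T)"
    by (auto simp: preorder_on_def refl_on_def hs_compl_def)
qed

definition incomparable :: "'a rel \<Rightarrow> 'a \<Rightarrow> 'a \<Rightarrow> bool" where
  "incomparable \<alpha> x y \<longleftrightarrow> (x, y) \<notin> \<alpha> \<and> (y, x) \<notin> \<alpha>"

lemma half_space_preorder_on: "half_space A \<alpha> \<Longrightarrow> preorder_on A \<alpha>"
  by (simp add: half_space_def)

lemma half_space_not_in_trans:
  assumes "half_space A \<alpha>" "x \<in> A" "y \<in> A" "z \<in> A"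
    and "(x, y) \<notin> \<alpha>" "(y, z) \<notin> \<alpha>" "x \<noteq> z"
  shows "(x, z) \<notin> \<alpha>"
proof -
  obtain \<beta> where \<beta>: "preorder_on A \<beta>" "\<alpha> \<union> \<beta> = A \<times> A" "\<alpha> \<inter> \<beta> = Id_on A"
    using assms(1) by (auto simp: half_space_def)
  have "(x, y) \<in> \<beta>" "(y, z) \<in> \<beta>"
    using \<beta>(2) assms(2-6) by auto
  then have "(x, z) \<in> \<beta>"
    using \<beta>(1) by (auto simp: preorder_on_def dest: transD)
  with \<beta>(3) \<open>x \<noteq> z\<close> show ?thesis by (metis IntI Id_on_iff)
qed

text \<open>Within a box of a half-space either all points are equivalent or all are pairwise
  incomparable.\<close>

lemma half_space_equiv_not_incomparable:
  assumes "half_space A \<alpha>" "x \<in> A" "y \<in> A" "z \<in> A"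
    and "(x, y) \<in> \<alpha> \<inter> \<alpha>\<inverse>" "x \<noteq> y"
  shows "\<not> incomparable \<alpha> y z"
proof
  assume yz: "incomparable \<alpha> y z"
  have "trans \<alpha>" using half_space_preorder_on[OF assms(1)] by (simp add: preorder_on_def)
  with assms(5) yz have "(x, z) \<notin> \<alpha>" "(z, y) \<notin> \<alpha>"
    by (auto simp: incomparable_def dest: transD)
  with half_space_not_in_trans[OF assms(1,2,4,3)] assms(5,6) show False by blast
qed

lemma half_space_incomparable_trans:
  assumes "half_space A \<alpha>" "x \<in> A" "y \<in> A" "z \<in> A"
    and "incomparable \<alpha> x y" "incomparable \<alpha> y z" "x \<noteq> z"
  shows "incomparable \<alpha> x z"
  using half_space_not_in_trans[OF assms(1-4)] half_space_not_in_trans[OF assms(1,4,3,2)] assms(5-7)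
  unfolding incomparable_def by blast

definition box_preorder :: "'a set \<Rightarrow> 'a rel \<Rightarrow> 'a rel" where
  "box_preorder A \<alpha> = \<alpha> \<union> {(x, y). x \<in> A \<and> y \<in> A \<and> incomparable \<alpha> x y}"

lemma box_preorder_sym_part:
  "box_preorder A \<alpha> \<inter> (box_preorder A \<alpha>)\<inverse> \<subseteq> \<alpha> \<inter> \<alpha>\<inverse> \<union> {(x, y). incomparable \<alpha> x y}"
  by (auto simp: box_preorder_def incomparable_def)

lemma total_preorder_on_box_preorder:
  assumes hs: "half_space A \<alpha>"
  shows "total_preorder_on A (box_preorder A \<alpha>)"
proof -
  have \<alpha>: "\<alpha> \<subseteq> A \<times> A" "refl_on A \<alpha>" "trans \<alpha>"
    using half_space_preorder_on[OF hs] by (auto simp: preorder_on_def)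
  have "trans (box_preorder A \<alpha>)"
  proof (rule transI)
    fix x y z assume xy: "(x, y) \<in> box_preorder A \<alpha>" and yz: "(y, z) \<in> box_preorder A \<alpha>"
    then have A: "x \<in> A" "y \<in> A" "z \<in> A" using \<alpha>(1) by (auto simp: box_preorder_def)
    consider "(x, y) \<in> \<alpha>" "(y, z) \<in> \<alpha>" | "(x, y) \<in> \<alpha>" "incomparable \<alpha> y z"
      | "incomparable \<alpha> x y" "(y, z) \<in> \<alpha>" | "incomparable \<alpha> x y" "incomparable \<alpha> y z"
      using xy yz by (auto simp: box_preorder_def)
    then show "(x, z) \<in> box_preorder A \<alpha>"
    proof cases
      case 4
      then show ?thesis
        using half_space_incomparable_trans[OF hs A] \<alpha>(2) A
        by (cases "x = z") (auto simp: box_preorder_def refl_on_def)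
    qed (use \<alpha>(3) A in \<open>auto simp: box_preorder_def incomparable_def dest: transD\<close>)
  qed
  then show ?thesis
    using \<alpha>(1,2) by (auto simp: total_preorder_on_def preorder_on_def refl_on_def total_on_def
        box_preorder_def incomparable_def)
qed

text \<open>Used on pairs from a common box of \<open>\<alpha>\<close>: \<open>F\<close> orders the full boxes, \<open>E\<close> the empty ones.\<close>

definition box_choice :: "'a rel \<Rightarrow> 'a rel \<Rightarrow> 'a rel \<Rightarrow> 'a rel" where
  "box_choice \<alpha> F E = {(x, y). if (x, y) \<in> \<alpha> \<inter> \<alpha>\<inverse> then (x, y) \<in> F else (x, y) \<in> E}"

lemma box_choice_sym_part:
  "box_choice \<alpha> F E \<inter> (box_choice \<alpha> F E)\<inverse> \<subseteq> F \<inter> F\<inverse> \<union> E \<inter> E\<inverse>"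
  by (auto simp: box_choice_def split: if_splits)

lemma total_preorder_on_lex_box_choice:
  assumes hs: "half_space A \<alpha>" and P: "total_preorder_on A P"
    and P_boxes: "P \<inter> P\<inverse> \<subseteq> \<alpha> \<inter> \<alpha>\<inverse> \<union> {(x, y). incomparable \<alpha> x y}"
    and F: "total_preorder_on A F" and E: "total_preorder_on A E"
  shows "total_preorder_on A (lex_refine P (box_choice \<alpha> F E))"
proof (rule total_preorder_on_lex_refine[OF P])
  have \<alpha>: "refl_on A \<alpha>" using half_space_preorder_on[OF hs] by (simp add: preorder_on_def)
  have FE: "refl_on A F" "trans F" "total_on A F" "refl_on A E" "trans E" "total_on A E"
    using F E by (auto simp: total_preorder_on_def preorder_on_def)
  show "(x, x) \<in> box_choice \<alpha> F E" if "x \<in> A" for x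
    using that \<alpha> FE(1) by (simp add: box_choice_def refl_on_def)
  show "(x, y) \<in> box_choice \<alpha> F E \<or> (y, x) \<in> box_choice \<alpha> F E"
    if "x \<in> A" "y \<in> A" "x \<noteq> y" for x y
    using that FE(3,6) unfolding box_choice_def total_on_def by auto
  fix x y z assume A: "x \<in> A" "y \<in> A" "z \<in> A" and "x \<noteq> y" "y \<noteq> z"
    and "(x, y) \<in> P \<inter> P\<inverse>" "(y, z) \<in> P \<inter> P\<inverse>"
    and Q: "(x, y) \<in> box_choice \<alpha> F E" "(y, z) \<in> box_choice \<alpha> F E"
  then consider "(x, y) \<in> \<alpha> \<inter> \<alpha>\<inverse>" "(y, z) \<in> \<alpha> \<inter> \<alpha>\<inverse>"
    | "incomparable \<alpha> x y" "incomparable \<alpha> y z"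
    using P_boxes half_space_equiv_not_incomparable[OF hs A]
      half_space_equiv_not_incomparable[OF hs A(3,2,1)] unfolding incomparable_def by blast
  then show "(x, z) \<in> box_choice \<alpha> F E"
  proof cases
    case 1
    then have "(x, z) \<in> \<alpha> \<inter> \<alpha>\<inverse>"
      using half_space_preorder_on[OF hs] by (auto simp: preorder_on_def dest: transD)
    with 1 Q FE(2) show ?thesis by (auto simp: box_choice_def dest: transD)
  next
    case 2
    show ?thesis
    proof (cases "x = z")
      case False
      with 2 have "incomparable \<alpha> x z" using half_space_incomparable_trans[OF hs A] by blast
      with 2 Q FE(5) show ?thesis by (auto simp: box_choice_def incomparable_def dest: transD)
    qed (use A \<alpha> FE(1) in \<open>simp add: box_choice_def refl_on_def\<close>)
  qed
qed

lemma box_equiv_subset: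
  "preorder_on A \<alpha> \<Longrightarrow> box_equiv A \<alpha> \<subseteq> A \<times> A"
  by (auto simp: box_equiv_def hs_compl_def preorder_on_def)

lemma half_space_box_of_incomparable:
  assumes hs: "half_space A \<alpha>" and "x \<in> A" "y \<in> A" "incomparable \<alpha> x y"
    and u: "u \<in> box_equiv A \<alpha> `` {x}"
  shows "u \<in> A" "u = x \<or> incomparable \<alpha> x u"
proof -
  show "u \<in> A"
    using u box_equiv_subset[OF half_space_preorder_on[OF hs]] by blast
  have "(u, x) \<in> \<alpha> \<inter> \<alpha>\<inverse> \<or> u = x \<or> incomparable \<alpha> x u"
    using u by (auto simp: box_equiv_def hs_compl_def incomparable_def)
  then show "u = x \<or> incomparable \<alpha> x u"
    using half_space_equiv_not_incomparable[OF hs \<open>u \<in> A\<close> \<open>x \<in> A\<close> \<open>y \<in> A\<close>] assms(4)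
    by blast
qed

lemma half_space_box_empty_if_incomparable:
  assumes hs: "half_space A \<alpha>" and "x \<in> A" "y \<in> A" "incomparable \<alpha> x y"
  shows "empty_box \<alpha> (box_equiv A \<alpha> `` {x})"
proof -
  note members = half_space_box_of_incomparable[OF assms]
  have "u = v" if "u \<in> box_equiv A \<alpha> `` {x}" "v \<in> box_equiv A \<alpha> `` {x}" "(u, v) \<in> \<alpha>" for u v
    using members[OF that(1)] members[OF that(2)] that(3)
      half_space_incomparable_trans[OF hs members(1)[OF that(1)] \<open>x \<in> A\<close> members(1)[OF that(2)]]
    by (auto simp: incomparable_def)
  then show ?thesis
    using members(1) half_space_preorder_on[OF hs]
    by (auto simp: empty_box_def preorder_on_def refl_on_def)
qed

lemma half_space_total_iff_no_empty_box:
  assumes hs: "half_space A \<alpha>"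
  shows "total_on A \<alpha> \<longleftrightarrow> \<not> (\<exists>B\<in>boxes A \<alpha>. empty_box \<alpha> B \<and> (\<exists>x\<in>B. \<exists>y\<in>B. x \<noteq> y))"
proof
  assume total: "total_on A \<alpha>"
  show "\<not> (\<exists>B\<in>boxes A \<alpha>. empty_box \<alpha> B \<and> (\<exists>x\<in>B. \<exists>y\<in>B. x \<noteq> y))"
  proof
    assume "\<exists>B\<in>boxes A \<alpha>. empty_box \<alpha> B \<and> (\<exists>x\<in>B. \<exists>y\<in>B. x \<noteq> y)"
    then obtain B x y where "B \<in> boxes A \<alpha>" "empty_box \<alpha> B" "x \<in> B" "y \<in> B" "x \<noteq> y"
      by blast
    moreover from this have "B \<subseteq> A"
      using box_equiv_subset[OF half_space_preorder_on[OF hs]]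
      by (auto simp: boxes_def elim!: quotientE)
    ultimately have "(x, y) \<in> \<alpha> \<inter> B \<times> B \<or> (y, x) \<in> \<alpha> \<inter> B \<times> B"
      using total by (auto simp: total_on_def)
    with \<open>empty_box \<alpha> B\<close> \<open>x \<noteq> y\<close> show False
      by (auto simp: empty_box_def)
  qed
next
  assume no_box: "\<not> (\<exists>B\<in>boxes A \<alpha>. empty_box \<alpha> B \<and> (\<exists>x\<in>B. \<exists>y\<in>B. x \<noteq> y))"
  show "total_on A \<alpha>"
  proof (rule total_onI, rule ccontr)
    fix x y assume "x \<in> A" "y \<in> A" "x \<noteq> y" and "\<not> ((x, y) \<in> \<alpha> \<or> (y, x) \<in> \<alpha>)"
    then have xy: "incomparable \<alpha> x y"
      by (simp add: incomparable_def)
    have "box_equiv A \<alpha> `` {x} \<in> boxes A \<alpha>"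
      using \<open>x \<in> A\<close> by (simp add: boxes_def quotientI)
    moreover have "x \<in> box_equiv A \<alpha> `` {x}" "y \<in> box_equiv A \<alpha> `` {x}"
      using \<open>x \<in> A\<close> \<open>y \<in> A\<close> half_space_preorder_on[OF hs] xy
      by (auto simp: box_equiv_def hs_compl_def incomparable_def preorder_on_def refl_on_def)
    ultimately show False
      using no_box \<open>x \<noteq> y\<close> half_space_box_empty_if_incomparable[OF hs \<open>x \<in> A\<close> \<open>y \<in> A\<close> xy]
      by blast
  qed
qed

section \<open>Linear extensions of the induced order\<close>

abbreviation qclass :: "'a rel \<Rightarrow> 'a \<Rightarrow> 'a set" where
  "qclass \<gamma> a \<equiv> (\<gamma> \<inter> \<gamma>\<inverse>) `` {a}"

definition quot_rel :: "'a rel \<Rightarrow> 'a rel \<Rightarrow> 'a set rel" where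
  "quot_rel \<gamma> T = {(qclass \<gamma> a, qclass \<gamma> b) | a b. (a, b) \<in> T}"

definition lift_rel :: "'a set \<Rightarrow> 'a rel \<Rightarrow> 'a set rel \<Rightarrow> 'a rel" where
  "lift_rel A \<gamma> l = {(a, b). a \<in> A \<and> b \<in> A \<and> (qclass \<gamma> a, qclass \<gamma> b) \<in> l}"

definition total_extension :: "'a set \<Rightarrow> 'a rel \<Rightarrow> 'a rel \<Rightarrow> bool" where
  "total_extension A \<gamma> T \<longleftrightarrow> total_preorder_on A T \<and> \<gamma> \<subseteq> T \<and> T \<inter> T\<inverse> \<subseteq> \<gamma>"

lemma r_of_eq_quot_rel: "r_of \<gamma> = quot_rel \<gamma> \<gamma>"
  by (simp add: r_of_def quot_rel_def)

context
  fixes A :: "'a set" and \<gamma> :: "'a rel"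
  assumes pre: "preorder_on A \<gamma>"
begin

lemma equiv_sym_part: "equiv A (\<gamma> \<inter> \<gamma>\<inverse>)"
proof (rule equivI)
  show "\<gamma> \<inter> \<gamma>\<inverse> \<subseteq> A \<times> A" "refl_on A (\<gamma> \<inter> \<gamma>\<inverse>)" "trans (\<gamma> \<inter> \<gamma>\<inverse>)"
    using pre by (auto simp: preorder_on_def refl_on_def dest: transD intro!: transI)
qed (auto intro: symI)

lemma qclass_eq_iff:
  "a \<in> A \<Longrightarrow> b \<in> A \<Longrightarrow> qclass \<gamma> a = qclass \<gamma> b \<longleftrightarrow> (a, b) \<in> \<gamma> \<and> (b, a) \<in> \<gamma>"
  using eq_equiv_class_iff[OF equiv_sym_part] by auto

lemma qclass_in_qclasses: "a \<in> A \<Longrightarrow> qclass \<gamma> a \<in> qclasses A \<gamma>"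
  by (simp add: qclasses_def quotientI)

lemma qclassesE:
  assumes "u \<in> qclasses A \<gamma>"
  obtains a where "a \<in> A" "u = qclass \<gamma> a"
  using assms unfolding qclasses_def by (blast elim: quotientE)

lemma quot_rel_iff:
  assumes "\<gamma> \<subseteq> T" "trans T" "a \<in> A" "b \<in> A"
  shows "(qclass \<gamma> a, qclass \<gamma> b) \<in> quot_rel \<gamma> T \<longleftrightarrow> (a, b) \<in> T"
proof
  assume "(qclass \<gamma> a, qclass \<gamma> b) \<in> quot_rel \<gamma> T"
  then obtain a' b' where eq: "qclass \<gamma> a = qclass \<gamma> a'" "qclass \<gamma> b = qclass \<gamma> b'"
    and "(a', b') \<in> T"
    unfolding quot_rel_def by blast
  have "(a, a') \<in> \<gamma>" "(b', b) \<in> \<gamma>"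
    using eq pre \<open>a \<in> A\<close> \<open>b \<in> A\<close> by (auto simp: preorder_on_def refl_on_def)
  with assms(1,2) \<open>(a', b') \<in> T\<close> show "(a, b) \<in> T"
    by (blast dest: transD)
qed (auto simp: quot_rel_def)

lemma partial_order_on_quot_rel:
  assumes T: "preorder_on A T" "\<gamma> \<subseteq> T" "T \<inter> T\<inverse> \<subseteq> \<gamma>"
  shows "partial_order_on (qclasses A \<gamma>) (quot_rel \<gamma> T)"
proof -
  have TA: "T \<subseteq> A \<times> A" "refl_on A T" and transT: "trans T"
    using T(1) by (auto simp: preorder_on_def)
  note iff = quot_rel_iff[OF T(2) transT]
  have "quot_rel \<gamma> T \<subseteq> qclasses A \<gamma> \<times> qclasses A \<gamma>"
    using TA(1) qclass_in_qclasses by (auto simp: quot_rel_def)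
  moreover have "refl_on (qclasses A \<gamma>) (quot_rel \<gamma> T)"
    using TA(2) by (auto simp: refl_on_def iff elim: qclassesE)
  moreover have "trans (quot_rel \<gamma> T)"
  proof (rule transI)
    fix u v w assume uv: "(u, v) \<in> quot_rel \<gamma> T" and vw: "(v, w) \<in> quot_rel \<gamma> T"
    then have "u \<in> qclasses A \<gamma>" "v \<in> qclasses A \<gamma>" "w \<in> qclasses A \<gamma>"
      using \<open>quot_rel \<gamma> T \<subseteq> _\<close> by auto
    then obtain a b c where "a \<in> A" "b \<in> A" "c \<in> A"
      and "u = qclass \<gamma> a" "v = qclass \<gamma> b" "w = qclass \<gamma> c"
      by (metis qclassesE)
    with uv vw transT show "(u, w) \<in> quot_rel \<gamma> T"
      by (auto simp: iff dest: transD)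
  qed
  moreover have "antisym (quot_rel \<gamma> T)"
  proof (rule antisymI)
    fix u v assume uv: "(u, v) \<in> quot_rel \<gamma> T" and vu: "(v, u) \<in> quot_rel \<gamma> T"
    then have "u \<in> qclasses A \<gamma>" "v \<in> qclasses A \<gamma>"
      using \<open>quot_rel \<gamma> T \<subseteq> _\<close> by auto
    then obtain a b where "a \<in> A" "b \<in> A" and "u = qclass \<gamma> a" "v = qclass \<gamma> b"
      by (metis qclassesE)
    with uv vu T(3) show "u = v"
      by (auto simp: iff qclass_eq_iff)
  qed
  ultimately show ?thesis
    by (simp add: partial_order_on_def preorder_on_def)
qed

lemma partial_order_on_r_of: "partial_order_on (qclasses A \<gamma>) (r_of \<gamma>)"
  using partial_order_on_quot_rel[OF pre] by (simp add: r_of_eq_quot_rel)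

lemma r_of_iff: "a \<in> A \<Longrightarrow> b \<in> A \<Longrightarrow> (qclass \<gamma> a, qclass \<gamma> b) \<in> r_of \<gamma> \<longleftrightarrow> (a, b) \<in> \<gamma>"
  using quot_rel_iff[of \<gamma> a b] pre by (simp add: r_of_eq_quot_rel preorder_on_def)

lemma linear_extension_quot_rel:
  assumes "total_extension A \<gamma> T"
  shows "linear_order_on (qclasses A \<gamma>) (quot_rel \<gamma> T)" "r_of \<gamma> \<subseteq> quot_rel \<gamma> T"
proof -
  have T: "preorder_on A T" "total_on A T" "\<gamma> \<subseteq> T" "T \<inter> T\<inverse> \<subseteq> \<gamma>"
    using assms by (auto simp: total_extension_def total_preorder_on_def)
  have "total_on (qclasses A \<gamma>) (quot_rel \<gamma> T)"
  proof (rule total_onI)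
    fix u v assume "u \<in> qclasses A \<gamma>" "v \<in> qclasses A \<gamma>" "u \<noteq> v"
    then obtain a b where "a \<in> A" "b \<in> A" "a \<noteq> b" "u = qclass \<gamma> a" "v = qclass \<gamma> b"
      by (metis qclassesE)
    moreover from this T(2) have "(a, b) \<in> T \<or> (b, a) \<in> T"
      by (auto simp: total_on_def)
    ultimately show "(u, v) \<in> quot_rel \<gamma> T \<or> (v, u) \<in> quot_rel \<gamma> T"
      unfolding quot_rel_def by blast
  qed
  with partial_order_on_quot_rel[OF T(1,3,4)] show "linear_order_on (qclasses A \<gamma>) (quot_rel \<gamma> T)"
    by (simp add: linear_order_on_def)
  show "r_of \<gamma> \<subseteq> quot_rel \<gamma> T"
    using T(3) by (auto simp: r_of_def quot_rel_def)
qed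

lemma total_extension_lift_rel:
  assumes l: "linear_order_on (qclasses A \<gamma>) l" "r_of \<gamma> \<subseteq> l"
  shows "total_extension A \<gamma> (lift_rel A \<gamma> l)"
proof -
  have l': "refl_on (qclasses A \<gamma>) l" "trans l" "antisym l" "total_on (qclasses A \<gamma>) l"
    using l(1) by (auto simp: linear_order_on_def partial_order_on_def preorder_on_def)
  have "total_on A (lift_rel A \<gamma> l)"
  proof (rule total_onI)
    fix a b assume "a \<in> A" "b \<in> A" "a \<noteq> b"
    with l'(1,4) show "(a, b) \<in> lift_rel A \<gamma> l \<or> (b, a) \<in> lift_rel A \<gamma> l"
      using qclass_in_qclasses unfolding lift_rel_def refl_on_def total_on_def
      by (cases "qclass \<gamma> a = qclass \<gamma> b") auto
  qed
  moreover have "\<gamma> \<subseteq> lift_rel A \<gamma> l"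
    using pre l(2) r_of_iff by (auto simp: lift_rel_def preorder_on_def)
  moreover have "lift_rel A \<gamma> l \<inter> (lift_rel A \<gamma> l)\<inverse> \<subseteq> \<gamma>"
  proof (rule subrelI)
    fix a b assume "(a, b) \<in> lift_rel A \<gamma> l \<inter> (lift_rel A \<gamma> l)\<inverse>"
    then have "a \<in> A" "b \<in> A" "qclass \<gamma> a = qclass \<gamma> b"
      using l'(3) by (auto simp: lift_rel_def dest: antisymD)
    then show "(a, b) \<in> \<gamma>"
      using qclass_eq_iff by blast
  qed
  moreover have "preorder_on A (lift_rel A \<gamma> l)"
    using l'(1,2) qclass_in_qclasses
    by (auto simp: preorder_on_def lift_rel_def refl_on_def intro!: transI dest: transD)
  ultimately show ?thesis
    by (simp add: total_extension_def total_preorder_on_def)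
qed

lemma hs_realizer_lift_rel:
  assumes L: "lin_realizer (qclasses A \<gamma>) (r_of \<gamma>) L"
  shows "hs_realizer A \<gamma> (lift_rel A \<gamma> ` L)"
proof -
  have ext: "total_extension A \<gamma> (lift_rel A \<gamma> l)" if "l \<in> L" for l
    using L that total_extension_lift_rel by (auto simp: lin_realizer_def)
  have "(A \<times> A) \<inter> \<Inter>(lift_rel A \<gamma> ` L) \<subseteq> \<gamma>"
  proof (rule subrelI)
    fix a b assume ab: "(a, b) \<in> (A \<times> A) \<inter> \<Inter>(lift_rel A \<gamma> ` L)"
    then have "(qclass \<gamma> a, qclass \<gamma> b) \<in> (qclasses A \<gamma> \<times> qclasses A \<gamma>) \<inter> \<Inter>L"
      by (auto simp: lift_rel_def qclass_in_qclasses)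
    with L ab show "(a, b) \<in> \<gamma>"
      using r_of_iff by (auto simp: lin_realizer_def)
  qed
  moreover have "\<gamma> \<subseteq> A \<times> A"
    using pre by (simp add: preorder_on_def)
  moreover have "half_space A (lift_rel A \<gamma> l)" if "l \<in> L" for l
    using ext[OF that] by (intro half_space_if_total_preorder_on) (simp add: total_extension_def)
  ultimately show ?thesis
    using ext unfolding hs_realizer_def total_extension_def by blast
qed

lemma lin_realizer_quot_rel:
  assumes ext: "\<And>i. i \<in> I \<Longrightarrow> total_extension A \<gamma> (T i)"
    and inter: "(A \<times> A) \<inter> (\<Inter>i\<in>I. T i) \<subseteq> \<gamma>"
  shows "lin_realizer (qclasses A \<gamma>) (r_of \<gamma>) ((\<lambda>i. quot_rel \<gamma> (T i)) ` I)"
proof -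
  have "(qclasses A \<gamma> \<times> qclasses A \<gamma>) \<inter> (\<Inter>i\<in>I. quot_rel \<gamma> (T i)) \<subseteq> r_of \<gamma>"
  proof (rule subrelI)
    fix u v assume uv: "(u, v) \<in> (qclasses A \<gamma> \<times> qclasses A \<gamma>) \<inter> (\<Inter>i\<in>I. quot_rel \<gamma> (T i))"
    then obtain a b where ab: "a \<in> A" "b \<in> A" "u = qclass \<gamma> a" "v = qclass \<gamma> b"
      by (metis IntD1 mem_Sigma_iff qclassesE)
    have "(a, b) \<in> T i" if "i \<in> I" for i
      using uv ab that ext[OF that] quot_rel_iff
      by (auto simp: total_extension_def total_preorder_on_def preorder_on_def)
    with ab inter show "(u, v) \<in> r_of \<gamma>"
      using r_of_iff by blast
  qed
  moreover have "r_of \<gamma> \<subseteq> qclasses A \<gamma> \<times> qclasses A \<gamma>"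
    using partial_order_on_r_of by (simp add: partial_order_on_def preorder_on_def)
  ultimately show ?thesis
    using linear_extension_quot_rel[OF ext] unfolding lin_realizer_def by blast
qed

end

section \<open>From half-space realizers to linear realizers\<close>

locale pivot_construction =
  fixes A :: "'a set" and \<gamma> :: "'a rel" and I :: "'i set" and \<alpha> :: "'i \<Rightarrow> 'a rel"
    and p q :: 'i and M :: "'a rel"
  assumes half_spaces: "\<And>i. i \<in> I \<Longrightarrow> half_space A (\<alpha> i)"
    and realizes: "(A \<times> A) \<inter> (\<Inter>i\<in>I. \<alpha> i) = \<gamma>"
    and p: "p \<in> I" and q: "q \<in> I" and p_neq_q: "p \<noteq> q"
    and M: "total_extension A \<gamma> M"
begin

definition pivot :: "'i \<Rightarrow> 'i" where
  "pivot i = (if i = p then q else p)"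

definition empty_box_order :: "'i \<Rightarrow> 'a rel" where
  "empty_box_order i = lex_refine ((box_preorder A (\<alpha> (pivot i)))\<inverse>)
     (box_choice (\<alpha> (pivot i)) (M\<inverse>) (if i = p then M\<inverse> else M))"

definition realizer_order :: "'i \<Rightarrow> 'a rel" where
  "realizer_order i = lex_refine (box_preorder A (\<alpha> i)) (box_choice (\<alpha> i) M (empty_box_order i))"

lemma pivot_in: "i \<in> I \<Longrightarrow> pivot i \<in> I"
  using p q by (simp add: pivot_def)

lemma total_preorder_on_M: "total_preorder_on A M"
  using M by (simp add: total_extension_def)

lemma total_preorder_on_empty_box_order:
  assumes "i \<in> I"
  shows "total_preorder_on A (empty_box_order i)"
proof -
  have hs: "half_space A (\<alpha> (pivot i))"
    using half_spaces pivot_in assms by blast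
  have "total_preorder_on A (if i = p then M\<inverse> else M)"
    using total_preorder_on_M total_preorder_on_converse[OF total_preorder_on_M] by simp
  moreover have "(box_preorder A (\<alpha> (pivot i)))\<inverse> \<inter> ((box_preorder A (\<alpha> (pivot i)))\<inverse>)\<inverse>
      \<subseteq> \<alpha> (pivot i) \<inter> (\<alpha> (pivot i))\<inverse> \<union> {(x, y). incomparable (\<alpha> (pivot i)) x y}"
    using box_preorder_sym_part by (auto simp: incomparable_def)
  ultimately show ?thesis
    unfolding empty_box_order_def
    by (intro total_preorder_on_lex_box_choice[OF hs] total_preorder_on_converse
        total_preorder_on_box_preorder[OF hs] total_preorder_on_M)
qed

lemma total_preorder_on_realizer_order:
  assumes "i \<in> I"
  shows "total_preorder_on A (realizer_order i)"
  unfolding realizer_order_def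
  using assms by (intro total_preorder_on_lex_box_choice half_spaces total_preorder_on_box_preorder
      box_preorder_sym_part total_preorder_on_M total_preorder_on_empty_box_order)

lemma subset_realizer_order:
  assumes "i \<in> I"
  shows "\<gamma> \<subseteq> realizer_order i"
proof (rule subrelI)
  fix x y assume "(x, y) \<in> \<gamma>"
  moreover from this have "(x, y) \<in> \<alpha> i" "(x, y) \<in> M"
    using realizes M \<open>i \<in> I\<close> by (auto simp: total_extension_def)
  ultimately show "(x, y) \<in> realizer_order i"
    by (auto simp: realizer_order_def lex_refine_def box_preorder_def box_choice_def incomparable_def)
qed

lemma realizer_order_sym_part: "realizer_order i \<inter> (realizer_order i)\<inverse> \<subseteq> \<gamma>"
proof -
  let ?E = "if i = p then M\<inverse> else M"
  have "empty_box_order i \<inter> (empty_box_order i)\<inverse> \<subseteq> M\<inverse> \<inter> (M\<inverse>)\<inverse> \<union> ?E \<inter> ?E\<inverse>"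
    using lex_refine_sym_part box_choice_sym_part unfolding empty_box_order_def by blast
  also have "\<dots> = M \<inter> M\<inverse>"
    by auto
  finally have "empty_box_order i \<inter> (empty_box_order i)\<inverse> \<subseteq> M \<inter> M\<inverse>" .
  moreover have "realizer_order i \<inter> (realizer_order i)\<inverse>
      \<subseteq> M \<inter> M\<inverse> \<union> empty_box_order i \<inter> (empty_box_order i)\<inverse>"
    using lex_refine_sym_part box_choice_sym_part unfolding realizer_order_def by blast
  moreover have "M \<inter> M\<inverse> \<subseteq> \<gamma>"
    using M by (simp add: total_extension_def)
  ultimately show ?thesis
    by blast
qed

lemma total_extension_realizer_order: "i \<in> I \<Longrightarrow> total_extension A \<gamma> (realizer_order i)"
  using total_preorder_on_realizer_order subset_realizer_order realizer_order_sym_part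
  by (simp add: total_extension_def)

lemma inter_realizer_orders_subset: "(A \<times> A) \<inter> (\<Inter>i\<in>I. realizer_order i) \<subseteq> \<gamma>"
proof (rule subrelI, rule ccontr)
  fix x y
  assume "(x, y) \<in> (A \<times> A) \<inter> (\<Inter>i\<in>I. realizer_order i)" and "(x, y) \<notin> \<gamma>"
  then have "x \<in> A" "y \<in> A" and below: "\<forall>i\<in>I. (x, y) \<in> realizer_order i"
    by auto
  from \<open>(x, y) \<notin> \<gamma>\<close> have not_M_equiv: "\<not> ((x, y) \<in> M \<and> (y, x) \<in> M)"
    using M by (auto simp: total_extension_def)
  have boxed: "(x, y) \<in> box_preorder A (\<alpha> i)" if "i \<in> I" for i
    using below that by (auto simp: realizer_order_def lex_refine_def)
  have full: "(x, y) \<in> M" if "i \<in> I" "(x, y) \<in> \<alpha> i \<inter> (\<alpha> i)\<inverse>" for i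
    using below that by (auto simp: realizer_order_def lex_refine_def box_preorder_def box_choice_def)
  have empty: "((x, y) \<in> \<alpha> (pivot i) \<inter> (\<alpha> (pivot i))\<inverse> \<and> (y, x) \<in> M) \<or>
      (incomparable (\<alpha> (pivot i)) x y \<and> (if i = p then (y, x) \<in> M else (x, y) \<in> M))"
    if "i \<in> I" "incomparable (\<alpha> i) x y" for i
  proof -
    have "(x, y) \<in> empty_box_order i"
      using below that \<open>x \<in> A\<close> \<open>y \<in> A\<close>
      by (auto simp: realizer_order_def lex_refine_def box_preorder_def box_choice_def incomparable_def)
    moreover have "(x, y) \<in> box_preorder A (\<alpha> (pivot i))"
      using boxed pivot_in that(1) by blast
    ultimately show ?thesis
      by (auto simp: empty_box_order_def lex_refine_def box_preorder_def box_choice_def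
          incomparable_def split: if_splits)
  qed
  have pivots: "pivot p = q" "\<And>i. i \<noteq> p \<Longrightarrow> pivot i = p"
    by (simp_all add: pivot_def)
  have not_incomparable_p: "\<not> incomparable (\<alpha> p) x y"
  proof
    assume "incomparable (\<alpha> p) x y"
    \<comment> \<open>then \<open>L\<^sub>p\<close> forces \<open>(y, x) \<in> M\<close>, whereas \<open>L\<^sub>q\<close> forces \<open>(x, y) \<in> M\<close>\<close>
    then show False
      using empty[OF p] empty[OF q] full[OF q] not_M_equiv pivots p_neq_q
      by (auto simp: incomparable_def)
  qed
  obtain k where "k \<in> I" "(x, y) \<notin> \<alpha> k"
    using realizes \<open>(x, y) \<notin> \<gamma>\<close> \<open>x \<in> A\<close> \<open>y \<in> A\<close> by blast
  then have "incomparable (\<alpha> k) x y" "k \<noteq> p"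
    using boxed not_incomparable_p by (auto simp: box_preorder_def)
  \<comment> \<open>\<open>x, y\<close> are equivalent in the pivot \<open>\<alpha>\<^sub>p\<close> of \<open>\<alpha>\<^sub>k\<close>: \<open>L\<^sub>k\<close> uses \<open>M\<inverse>\<close> and \<open>L\<^sub>p\<close> uses \<open>M\<close>\<close>
  then show False
    using empty[OF \<open>k \<in> I\<close>] full[OF p] not_incomparable_p not_M_equiv pivots by auto
qed

lemma lin_realizer_realizer_orders:
  assumes "preorder_on A \<gamma>"
  shows "lin_realizer (qclasses A \<gamma>) (r_of \<gamma>) ((\<lambda>i. quot_rel \<gamma> (realizer_order i)) ` I)"
  using assms total_extension_realizer_order inter_realizer_orders_subset by (rule lin_realizer_quot_rel)

end

section \<open>Dimensions\<close>

lemma card_of_minimal: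
  assumes "P R"
  defines "R0 \<equiv> SOME R. P R \<and> (\<forall>R'. P R' \<longrightarrow> |R| \<le>o |R'| )"
  shows "P R0" and "|R0| \<le>o |R|"
proof -
  obtain r where "r \<in> {|R| | R. P R}" and r: "\<forall>r'\<in>{|R| | R. P R}. r \<le>o r'"
    using exists_minim_Well_order[of "{|R| | R. P R}"] assms card_of_Well_order by blast
  then have "\<exists>R. P R \<and> (\<forall>R'. P R' \<longrightarrow> |R| \<le>o |R'| )"
    by blast
  then have "P R0 \<and> (\<forall>R'. P R' \<longrightarrow> |R0| \<le>o |R'| )"
    unfolding R0_def by (rule someI_ex)
  with assms show "P R0" "|R0| \<le>o |R|"
    by blast+
qed

lemma card_of_ordIso_singleton_iff: "|R| =o |{b}| \<longleftrightarrow> (\<exists>a. R = {a})"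
proof
  assume "|R| =o |{b}|"
  then obtain f where "bij_betw f {b} R"
    using card_of_ordIso ordIso_symmetric by blast
  then show "\<exists>a. R = {a}"
    by (auto simp: bij_betw_def)
next
  assume "\<exists>a. R = {a}"
  then obtain a where "R = {a}" ..
  then have "bij_betw (\<lambda>_. a) {b} R"
    by (simp add: bij_betw_def)
  then show "|R| =o |{b}|"
    using card_of_ordIso ordIso_symmetric by blast
qed

lemma card_of_two_ordLeq_iff: "|{0::nat, 1}| \<le>o |R| \<longleftrightarrow> (\<exists>x\<in>R. \<exists>y\<in>R. x \<noteq> y)"
proof
  assume "|{0::nat, 1}| \<le>o |R|"
  then obtain f where "inj_on f {0::nat, 1}" "f ` {0, 1} \<subseteq> R"
    by (auto simp flip: card_of_ordLeq)
  then have "f 0 \<in> R" "f 1 \<in> R" "f 0 \<noteq> f 1"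
    by (auto dest: inj_onD)
  then show "\<exists>x\<in>R. \<exists>y\<in>R. x \<noteq> y"
    by blast
next
  assume "\<exists>x\<in>R. \<exists>y\<in>R. x \<noteq> y"
  then obtain x y where "x \<in> R" "y \<in> R" "x \<noteq> y" by blast
  let ?f = "\<lambda>n::nat. if n = 0 then x else y"
  have "inj_on ?f {0, 1}" "?f ` {0, 1} \<subseteq> R"
    using \<open>x \<in> R\<close> \<open>y \<in> R\<close> \<open>x \<noteq> y\<close> by (auto simp: inj_on_def)
  then show "|{0::nat, 1}| \<le>o |R|"
    unfolding card_of_ordLeq[symmetric] by blast
qed

lemma odim_le: "lin_realizer X r L \<Longrightarrow> odim X r \<le>o |L|"
  unfolding odim_def by (rule card_of_minimal(2))

lemma hsdim_le: "hs_realizer A \<gamma> R \<Longrightarrow> hsdim A \<gamma> \<le>o |R|"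
  unfolding hsdim_def by (rule card_of_minimal(2))

lemma odim_realized:
  assumes "preorder_on A \<gamma>"
  obtains L where "lin_realizer (qclasses A \<gamma>) (r_of \<gamma>) L" "odim (qclasses A \<gamma>) (r_of \<gamma>) = |L|"
  using card_of_minimal(1)[of "lin_realizer (qclasses A \<gamma>) (r_of \<gamma>)",
      OF lin_realizer_all_extensions[OF partial_order_on_r_of[OF assms]]]
  by (auto simp: odim_def)

lemma hsdim_realized:
  assumes "preorder_on A \<gamma>"
  obtains R where "hs_realizer A \<gamma> R" "hsdim A \<gamma> = |R|"
  using card_of_minimal(1)[of "hs_realizer A \<gamma>", OF hs_realizer_lift_rel[OF assms
        lin_realizer_all_extensions[OF partial_order_on_r_of[OF assms]]]]
  by (auto simp: hsdim_def)

lemma hsdim_le_odim: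
  assumes "preorder_on A \<gamma>"
  shows "hsdim A \<gamma> \<le>o odim (qclasses A \<gamma>) (r_of \<gamma>)"
proof -
  obtain L where L: "lin_realizer (qclasses A \<gamma>) (r_of \<gamma>) L" "odim (qclasses A \<gamma>) (r_of \<gamma>) = |L|"
    using odim_realized[OF assms] .
  have "hsdim A \<gamma> \<le>o |lift_rel A \<gamma> ` L|"
    using hsdim_le[OF hs_realizer_lift_rel[OF assms L(1)]] .
  also have "|lift_rel A \<gamma> ` L| \<le>o |L|"
    by (rule card_of_image)
  finally show ?thesis
    using L(2) by simp
qed

lemma odim_le_card_of_half_space_family:
  assumes pre: "preorder_on A \<gamma>" and "\<And>i. i \<in> I \<Longrightarrow> half_space A (\<alpha> i)"
    and "(A \<times> A) \<inter> (\<Inter>i\<in>I. \<alpha> i) = \<gamma>" and "p \<in> I" "q \<in> I" "p \<noteq> q"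
  shows "odim (qclasses A \<gamma>) (r_of \<gamma>) \<le>o |I|"
proof -
  obtain l where "linear_order_on (qclasses A \<gamma>) l" "r_of \<gamma> \<subseteq> l"
    using szpilrajn[OF partial_order_on_r_of[OF pre]] by blast
  then have "total_extension A \<gamma> (lift_rel A \<gamma> l)"
    by (rule total_extension_lift_rel[OF pre])
  with assms interpret pivot_construction A \<gamma> I \<alpha> p q "lift_rel A \<gamma> l"
    by unfold_locales
  have "odim (qclasses A \<gamma>) (r_of \<gamma>) \<le>o |(\<lambda>i. quot_rel \<gamma> (realizer_order i)) ` I|"
    by (rule odim_le[OF lin_realizer_realizer_orders[OF pre]])
  also have "|(\<lambda>i. quot_rel \<gamma> (realizer_order i)) ` I| \<le>o |I|"
    by (rule card_of_image)
  finally show ?thesis .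
qed

lemma odim_eq_hsdim:
  assumes pre: "preorder_on A \<gamma>" and "|{0::nat, 1}| \<le>o hsdim A \<gamma>"
  shows "odim (qclasses A \<gamma>) (r_of \<gamma>) =o hsdim A \<gamma>"
proof -
  obtain R where R: "hs_realizer A \<gamma> R" "hsdim A \<gamma> = |R|"
    using hsdim_realized[OF pre] .
  have "\<exists>p\<in>R. \<exists>q\<in>R. p \<noteq> q"
    using assms(2) unfolding R(2) card_of_two_ordLeq_iff .
  moreover have "\<And>\<alpha>. \<alpha> \<in> R \<Longrightarrow> half_space A (id \<alpha>)" "(A \<times> A) \<inter> (\<Inter>\<alpha>\<in>R. id \<alpha>) = \<gamma>"
    using R(1) by (simp_all add: hs_realizer_def)
  ultimately have "odim (qclasses A \<gamma>) (r_of \<gamma>) \<le>o hsdim A \<gamma>"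
    using odim_le_card_of_half_space_family[OF pre, of R id] R(2) by metis
  with hsdim_le_odim[OF pre] show ?thesis
    by (simp add: ordIso_iff_ordLeq)
qed

lemma odim_le_two_if_half_space:
  assumes "half_space A \<gamma>"
  shows "odim (qclasses A \<gamma>) (r_of \<gamma>) \<le>o |{0::nat, 1}|"
proof -
  have "(A \<times> A) \<inter> (\<Inter>i\<in>{0::nat, 1}. \<gamma>) = \<gamma>"
    using half_space_preorder_on[OF assms] by (auto simp: preorder_on_def)
  with assms show ?thesis
    using odim_le_card_of_half_space_family[OF half_space_preorder_on[OF assms],
        of "{0::nat, 1}" "\<lambda>_. \<gamma>" 0 1]
    by simp
qed

lemma odim_le_one_if_total:
  assumes pre: "preorder_on A \<gamma>" and "total_on A \<gamma>"
  shows "odim (qclasses A \<gamma>) (r_of \<gamma>) \<le>o |{0::nat}|"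
proof -
  have "total_extension A \<gamma> \<gamma>"
    using assms by (simp add: total_extension_def total_preorder_on_def)
  then have "linear_order_on (qclasses A \<gamma>) (r_of \<gamma>)"
    using linear_extension_quot_rel(1)[OF pre] by (simp add: r_of_eq_quot_rel)
  then have "lin_realizer (qclasses A \<gamma>) (r_of \<gamma>) {r_of \<gamma>}"
    by (auto simp: lin_realizer_def linear_order_on_def partial_order_on_def preorder_on_def)
  then have "odim (qclasses A \<gamma>) (r_of \<gamma>) \<le>o |{r_of \<gamma>}|"
    by (rule odim_le)
  also have "|{r_of \<gamma>}| =o |{0::nat}|"
    by (rule card_of_ordIso_singleton_iff[THEN iffD2]) blast
  finally show ?thesis .
qed

lemma two_le_odim_if_incomparable:
  assumes pre: "preorder_on A \<gamma>" and "x \<in> A" "y \<in> A" "incomparable \<gamma> x y"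
  shows "|{0::nat, 1}| \<le>o odim (qclasses A \<gamma>) (r_of \<gamma>)"
proof -
  obtain L where L: "lin_realizer (qclasses A \<gamma>) (r_of \<gamma>) L" "odim (qclasses A \<gamma>) (r_of \<gamma>) = |L|"
    using odim_realized[OF pre] .
  have "\<exists>l\<in>L. \<exists>l'\<in>L. l \<noteq> l'"
    using lin_realizer_two_elements[OF L(1) qclass_in_qclasses[OF pre \<open>x \<in> A\<close>]
        qclass_in_qclasses[OF pre \<open>y \<in> A\<close>]] r_of_iff[OF pre] assms(2-4)
    by (auto simp: incomparable_def)
  then have "|{0::nat, 1}| \<le>o |L|"
    by (rule card_of_two_ordLeq_iff[THEN iffD2])
  with L(2) show ?thesis
    by simp
qed

lemma half_space_if_hsdim_one:
  assumes pre: "preorder_on A \<gamma>" and "hsdim A \<gamma> =o |{0::nat}|"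
  shows "half_space A \<gamma>"
proof -
  obtain R where R: "hs_realizer A \<gamma> R" "hsdim A \<gamma> = |R|"
    using hsdim_realized[OF pre] .
  with assms(2) obtain \<alpha> where "R = {\<alpha>}"
    using card_of_ordIso_singleton_iff by metis
  with R(1) have "half_space A \<alpha>" "(A \<times> A) \<inter> \<alpha> = \<gamma>"
    by (auto simp: hs_realizer_def)
  moreover from this have "\<alpha> \<subseteq> A \<times> A"
    using half_space_preorder_on by (auto simp: preorder_on_def)
  ultimately show ?thesis
    by (simp add: Int_absorb1)
qed

lemma odim_eq_one_if_total:
  assumes pre: "preorder_on A \<gamma>" and "hsdim A \<gamma> =o |{0::nat}|" and "total_on A \<gamma>"
  shows "odim (qclasses A \<gamma>) (r_of \<gamma>) =o |{0::nat}|"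
proof -
  have "|{0::nat}| \<le>o odim (qclasses A \<gamma>) (r_of \<gamma>)"
    using ordIso_ordLeq_trans[OF ordIso_symmetric[OF assms(2)] hsdim_le_odim[OF pre]] .
  with odim_le_one_if_total[OF pre assms(3)] show ?thesis
    by (simp add: ordIso_iff_ordLeq)
qed

lemma odim_eq_two_if_not_total:
  assumes hs: "half_space A \<gamma>" and "\<not> total_on A \<gamma>"
  shows "odim (qclasses A \<gamma>) (r_of \<gamma>) =o |{0::nat, 1}|"
proof -
  obtain x y where "x \<in> A" "y \<in> A" "incomparable \<gamma> x y"
    using assms(2) by (auto simp: total_on_def incomparable_def)
  with half_space_preorder_on[OF hs] have "|{0::nat, 1}| \<le>o odim (qclasses A \<gamma>) (r_of \<gamma>)"
    by (rule two_le_odim_if_incomparable)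
  with odim_le_two_if_half_space[OF hs] show ?thesis
    by (simp add: ordIso_iff_ordLeq)
qed

theorem theorem2p15:
  fixes A :: "'a set" and \<gamma> :: "'a rel"
  assumes "preorder_on A \<gamma>"
  shows "((hsdim A \<gamma>, card_of {0::nat}) \<in> ordIso \<longrightarrow>
            half_space A \<gamma> \<and>
            ((\<not> (\<exists>B\<in>boxes A \<gamma>. empty_box \<gamma> B \<and> (\<exists>x\<in>B. \<exists>y\<in>B. x \<noteq> y)))
               \<longrightarrow> (odim (qclasses A \<gamma>) (r_of \<gamma>), card_of {0::nat}) \<in> ordIso) \<and>
            ((\<exists>B\<in>boxes A \<gamma>. empty_box \<gamma> B \<and> (\<exists>x\<in>B. \<exists>y\<in>B. x \<noteq> y))
               \<longrightarrow> (odim (qclasses A \<gamma>) (r_of \<gamma>), card_of {0::nat, 1}) \<in> ordIso))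
       \<and> ((card_of {0::nat, 1}, hsdim A \<gamma>) \<in> ordLeq \<longrightarrow>
            (odim (qclasses A \<gamma>) (r_of \<gamma>), hsdim A \<gamma>) \<in> ordIso)"
proof (intro conjI impI)
  assume one: "hsdim A \<gamma> =o |{0::nat}|"
  then show hs: "half_space A \<gamma>"
    by (rule half_space_if_hsdim_one[OF assms])
  show "odim (qclasses A \<gamma>) (r_of \<gamma>) =o |{0::nat}|"
    if "\<not> (\<exists>B\<in>boxes A \<gamma>. empty_box \<gamma> B \<and> (\<exists>x\<in>B. \<exists>y\<in>B. x \<noteq> y))"
    using that odim_eq_one_if_total[OF assms one] half_space_total_iff_no_empty_box[OF hs] by blast
  show "odim (qclasses A \<gamma>) (r_of \<gamma>) =o |{0::nat, 1}|"
    if "\<exists>B\<in>boxes A \<gamma>. empty_box \<gamma> B \<and> (\<exists>x\<in>B. \<exists>y\<in>B. x \<noteq> y)"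
    using that odim_eq_two_if_not_total[OF hs] half_space_total_iff_no_empty_box[OF hs] by blast
next
  show "odim (qclasses A \<gamma>) (r_of \<gamma>) =o hsdim A \<gamma>" if "|{0::nat, 1}| \<le>o hsdim A \<gamma>"
    using odim_eq_hsdim[OF assms that] .
qed

end
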